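(* For every input $\sigma$ of List Update with Delays and every time $t$, the total cost (access cost plus swaps plus delay cost) incurred by ALG up to time $t$ is at most $6\sum_{k=1}^m d_k(t)$.
   Context: List Update with Delays. A set $\mathbb{E}$ of $n$ elements is kept in an ordered list (position $1$ is the head). An input $\sigma$ is a sequence of requests $r_1,\dots,r_m$; request $r_k$ specifies an element $e_k\in\mathbb{E}$, an arrival time $a_k$ and a delay function $D_k$ which is non-negative, non-decreasing, and $0$ up to time $a_k$. An algorithm may perform an access up to position $i$ at cost $i$, serving every pending request whose element currently lies in positions $1,\dots,i$, and may swap adjacent elements at cost $1$; actions are instantaneous. A request served at time $s$ incurs delay cost $D_k(s)$. Cost = access + swaps + delay. Algorithm ALG maintains a request counter $RC_k$ for each request and an element counter $EC_e$ for each element, with $EC_e=0$ initially. When $r_k$ arrives, $RC_k$ is created with value $0$. While $r_k$ is pending in ALG, $RC_k$ and $EC_{e_k}$ each increase by exactly the delay $r_k$ incurs; after $r_k$ is served, $RC_k$ stops increasing until it is deleted. Events: (i) prefix-request-counters event on $\ell\in[n]$, occurring when the sum of the non-deleted request counters of requests whose elements are currently in positions $1,\dots,\ell$ reaches $\ell$: ALG accesses the first $\min(2\ell,n)$ positions and deletes the request counters of requests for the elements in the first $\ell$ positions; (ii) element-counter event on $e$, occurring when $EC_e$ reaches the current position $\ell$ of $e$: ALG accesses the first $\min(2\ell,n)$ positions, deletes all request counters of requests for $e$, sets $EC_e\leftarrow 0$, and moves $e$ to the front by $\ell-1$ adjacent swaps. For a request $r_k$ let $s_k$ be the time ALG serves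 it ($s_k=\infty$ if never). Define $d_k(t)=D_k(\min(t,s_k))$ (for $s_k=\infty$, $d_k(t)=D_k(t)$), the delay ALG has incurred on $r_k$ up to time $t$. *)

theory Defs
  imports Main "HOL-Library.Multiset" Complex_Main
begin

text \<open>Input: initial list L0 (distinct, length n), m requests indexed 0..<m with
  element el k, arrival time a k and delay function D k.
  A run of ALG up to horizon T is a finite list of events (time, event),
  sorted by time; the event list is processed in order (simultaneous events
  in list order).\<close>

datatype 'e lu_event = PrefixEv nat | ElemEv 'e

text \<open>1-indexed position of an element in a list.\<close>
fun pos :: "'e list \<Rightarrow> 'e \<Rightarrow> nat" where
  "pos [] x = 0"
| "pos (y # ys) x = (if x = y then 1 else Suc (pos ys x))"

fun acc_len :: "'e list \<Rightarrow> 'e lu_event \<Rightarrow> nat" where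
  "acc_len L (PrefixEv l) = min (2 * l) (length L)"
| "acc_len L (ElemEv e) = min (2 * pos L e) (length L)"

fun swaps :: "'e list \<Rightarrow> 'e lu_event \<Rightarrow> nat" where
  "swaps L (PrefixEv l) = 0"
| "swaps L (ElemEv e) = pos L e - 1"

fun step_list :: "'e list \<Rightarrow> 'e lu_event \<Rightarrow> 'e list" where
  "step_list L (PrefixEv l) = L"
| "step_list L (ElemEv e) = e # remove1 e L"

definition list_before :: "'e list \<Rightarrow> (real \<times> 'e lu_event) list \<Rightarrow> nat \<Rightarrow> 'e list" where
  "list_before L0 evs i = foldl (\<lambda>L p. step_list L (snd p)) L0 (take i evs)"

definition serves :: "'e list \<Rightarrow> (nat \<Rightarrow> 'e) \<Rightarrow> (nat \<Rightarrow> real) \<Rightarrow>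
    (real \<times> 'e lu_event) list \<Rightarrow> nat \<Rightarrow> nat \<Rightarrow> bool" where
  "serves L0 el a evs j k \<longleftrightarrow> j < length evs \<and> a k \<le> fst (evs ! j) \<and>
     pos (list_before L0 evs j) (el k) \<le> acc_len (list_before L0 evs j) (snd (evs ! j))"

definition served_time :: "'e list \<Rightarrow> (nat \<Rightarrow> 'e) \<Rightarrow> (nat \<Rightarrow> real) \<Rightarrow>
    (real \<times> 'e lu_event) list \<Rightarrow> nat \<Rightarrow> real option" where
  "served_time L0 el a evs k =
     (if \<exists>j. serves L0 el a evs j k
      then Some (fst (evs ! (LEAST j. serves L0 el a evs j k))) else None)"

text \<open>d_k(t) = D_k(min(t, s_k)), the delay ALG has incurred on request k up to t.\<close>
definition dly :: "'e list \<Rightarrow> (nat \<Rightarrow> 'e) \<Rightarrow> (nat \<Rightarrow> real) \<Rightarrow> (nat \<Rightarrow> real \<Rightarrow> real) \<Rightarrow>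
    (real \<times> 'e lu_event) list \<Rightarrow> nat \<Rightarrow> real \<Rightarrow> real" where
  "dly L0 el a D evs k t =
     (case served_time L0 el a evs k of None \<Rightarrow> D k t | Some s \<Rightarrow> D k (min t s))"

definition deleted :: "'e list \<Rightarrow> (nat \<Rightarrow> 'e) \<Rightarrow> (nat \<Rightarrow> real) \<Rightarrow>
    (real \<times> 'e lu_event) list \<Rightarrow> nat \<Rightarrow> nat \<Rightarrow> bool" where
  "deleted L0 el a evs i k \<longleftrightarrow> (\<exists>j<i. j < length evs \<and> a k \<le> fst (evs ! j) \<and>
     (case snd (evs ! j) of
        PrefixEv l \<Rightarrow> pos (list_before L0 evs j) (el k) \<le> l
      | ElemEv e \<Rightarrow> el k = e))"

definition prefix_sum :: "'e list \<Rightarrow> nat \<Rightarrow> (nat \<Rightarrow> 'e) \<Rightarrow> (nat \<Rightarrow> real) \<Rightarrow>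
    (nat \<Rightarrow> real \<Rightarrow> real) \<Rightarrow> (real \<times> 'e lu_event) list \<Rightarrow> nat \<Rightarrow> real \<Rightarrow> nat \<Rightarrow> real" where
  "prefix_sum L0 m el a D evs i t l =
     (\<Sum>k\<in>{k. k < m \<and> \<not> deleted L0 el a evs i k \<and>
             pos (list_before L0 evs i) (el k) \<le> l}. dly L0 el a D evs k t)"

text \<open>Element counter EC_e after the first i events, at time t: delay incurred
  by requests for e since the last element-counter event on e (or since start).\<close>
definition elem_counter :: "'e list \<Rightarrow> nat \<Rightarrow> (nat \<Rightarrow> 'e) \<Rightarrow> (nat \<Rightarrow> real) \<Rightarrow>
    (nat \<Rightarrow> real \<Rightarrow> real) \<Rightarrow> (real \<times> 'e lu_event) list \<Rightarrow> nat \<Rightarrow> real \<Rightarrow> 'e \<Rightarrow> real" where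
  "elem_counter L0 m el a D evs i t e =
     (\<Sum>k\<in>{k. k < m \<and> el k = e}.
        dly L0 el a D evs k t -
        (if \<exists>j<i. j < length evs \<and> snd (evs ! j) = ElemEv e
         then dly L0 el a D evs k
                (fst (evs ! (GREATEST j. j < i \<and> j < length evs \<and> snd (evs ! j) = ElemEv e)))
         else 0))"

definition enabled :: "'e list \<Rightarrow> nat \<Rightarrow> (nat \<Rightarrow> 'e) \<Rightarrow> (nat \<Rightarrow> real) \<Rightarrow>
    (nat \<Rightarrow> real \<Rightarrow> real) \<Rightarrow> (real \<times> 'e lu_event) list \<Rightarrow> nat \<Rightarrow> real \<Rightarrow> 'e lu_event \<Rightarrow> bool" where
  "enabled L0 m el a D evs i t ev =
     (case ev of
        PrefixEv l \<Rightarrow> 1 \<le> l \<and> l \<le> length L0 \<and> real l \<le> prefix_sum L0 m el a D evs i t l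
      | ElemEv e \<Rightarrow> e \<in> set L0 \<and>
          real (pos (list_before L0 evs i) e) \<le> elem_counter L0 m el a D evs i t e)"

definition alg_run :: "'e list \<Rightarrow> nat \<Rightarrow> (nat \<Rightarrow> 'e) \<Rightarrow> (nat \<Rightarrow> real) \<Rightarrow>
    (nat \<Rightarrow> real \<Rightarrow> real) \<Rightarrow> real \<Rightarrow> (real \<times> 'e lu_event) list \<Rightarrow> bool" where
  "alg_run L0 m el a D T evs \<longleftrightarrow>
     sorted (map fst evs) \<and> (\<forall>p\<in>set evs. fst p \<le> T) \<and>
     (\<forall>i<length evs. enabled L0 m el a D evs i (fst (evs ! i)) (snd (evs ! i))) \<and>
     (\<forall>i\<le>length evs. \<forall>t.
        (i = 0 \<or> fst (evs ! (i - 1)) \<le> t) \<and>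
        (if i < length evs then t < fst (evs ! i) else t \<le> T)
        \<longrightarrow> (\<forall>ev. \<not> enabled L0 m el a D evs i t ev))"

definition alg_cost :: "'e list \<Rightarrow> nat \<Rightarrow> (nat \<Rightarrow> 'e) \<Rightarrow> (nat \<Rightarrow> real) \<Rightarrow>
    (nat \<Rightarrow> real \<Rightarrow> real) \<Rightarrow> real \<Rightarrow> (real \<times> 'e lu_event) list \<Rightarrow> real" where
  "alg_cost L0 m el a D T evs =
     (\<Sum>i<length evs. real (acc_len (list_before L0 evs i) (snd (evs ! i)))
                     + real (swaps (list_before L0 evs i) (snd (evs ! i))))
     + (\<Sum>k<m. dly L0 el a D evs k T)"

end

theory Submission
  imports Defs
begin

text \<open>A prefix-request-counters event on \<open>\<ell>\<close> costs at most \<open>2\<ell>\<close>, and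
  \<open>\<ell>\<close> is at most the delay of the requests whose counters the event deletes; as every
  request counter is deleted at most once, these events cost at most \<open>2 \<Sum>\<^sub>k d\<^sub>k(t)\<close>.
  An element-counter event on \<open>e\<close> at position \<open>\<ell>\<close> costs at most \<open>2\<ell> + (\<ell> - 1) \<le> 3\<ell>\<close>,
  and \<open>\<ell> \<le> EC\<^sub>e\<close>, the delay incurred by requests for \<open>e\<close> since the previous event on
  \<open>e\<close>; these increments telescope per request, so these events cost at most
  \<open>3 \<Sum>\<^sub>k d\<^sub>k(t)\<close>. Adding the delay cost itself gives the factor 6.\<close>

lemma sum_telescope_last_occurrence:
  fixes P :: "nat \<Rightarrow> bool" and g :: "nat \<Rightarrow> 'a::ab_group_add"
  shows "(\<Sum>i<n. if P i then g i - (if \<exists>j<i. P j then g (GREATEST j. j < i \<and> P j) else 0) else 0)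
        = (if \<exists>j<n. P j then g (GREATEST j. j < n \<and> P j) else 0)"
proof (induction n)
  case 0
  show ?case by simp
next
  case (Suc n)
  show ?case
  proof (cases "P n")
    case True
    have "(GREATEST j. j < Suc n \<and> P j) = n"
      by (rule Greatest_equality) (use True in auto)
    then show ?thesis using Suc True by auto
  next
    case False
    then have "(\<lambda>j. j < Suc n \<and> P j) = (\<lambda>j. j < n \<and> P j)" "(\<exists>j<Suc n. P j) = (\<exists>j<n. P j)"
      using less_Suc_eq by auto
    then show ?thesis using Suc False by auto
  qed
qed

lemma deleted_Suc: "deleted L0 el a evs i k \<Longrightarrow> deleted L0 el a evs (Suc i) k"
  unfolding deleted_def using less_SucI by blast

lemma not_deleted_0: "\<not> deleted L0 el a evs 0 k"
  unfolding deleted_def by simp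

definition event_cost :: "'e list \<Rightarrow> (real \<times> 'e lu_event) list \<Rightarrow> nat \<Rightarrow> real" where
  "event_cost L0 evs i = real (acc_len (list_before L0 evs i) (snd (evs ! i)))
                       + real (swaps (list_before L0 evs i) (snd (evs ! i)))"

lemma event_cost_PrefixEv: "snd (evs ! i) = PrefixEv l \<Longrightarrow> event_cost L0 evs i \<le> 2 * real l"
  unfolding event_cost_def by simp

lemma event_cost_ElemEv:
  "snd (evs ! i) = ElemEv e \<Longrightarrow> event_cost L0 evs i \<le> 3 * real (pos (list_before L0 evs i) e)"
  unfolding event_cost_def by simp

lemma alg_cost_eq:
  "alg_cost L0 m el a D T evs = (\<Sum>i<length evs. event_cost L0 evs i) + (\<Sum>k<m. dly L0 el a D evs k T)"
  unfolding alg_cost_def event_cost_def ..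

locale alg_execution =
  fixes L0 :: "'e list" and m :: nat and el :: "nat \<Rightarrow> 'e" and a :: "nat \<Rightarrow> real"
    and D :: "nat \<Rightarrow> real \<Rightarrow> real" and T :: real and evs :: "(real \<times> 'e lu_event) list"
  assumes delay_nonneg: "k < m \<Longrightarrow> 0 \<le> D k t"
    and delay_mono: "k < m \<Longrightarrow> mono (D k)"
    and delay_before_arrival: "k < m \<Longrightarrow> t \<le> a k \<Longrightarrow> D k t = 0"
    and run: "alg_run L0 m el a D T evs"
begin

abbreviation d :: "nat \<Rightarrow> real \<Rightarrow> real" where
  "d k t \<equiv> dly L0 el a D evs k t"

lemma d_nonneg: "k < m \<Longrightarrow> 0 \<le> d k t"
  using delay_nonneg unfolding dly_def by (cases "served_time L0 el a evs k") auto

lemma d_mono: "k < m \<Longrightarrow> s \<le> t \<Longrightarrow> d k s \<le> d k t"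
  using delay_mono[THEN monoD] unfolding dly_def
  by (cases "served_time L0 el a evs k") (simp_all add: min.mono)

lemma d_before_arrival: "k < m \<Longrightarrow> t \<le> a k \<Longrightarrow> d k t = 0"
  using delay_before_arrival unfolding dly_def by (cases "served_time L0 el a evs k") auto

lemma event_time_le: "i < length evs \<Longrightarrow> fst (evs ! i) \<le> T"
  using run unfolding alg_run_def by (meson nth_mem)

lemma event_enabled: "i < length evs \<Longrightarrow> enabled L0 m el a D evs i (fst (evs ! i)) (snd (evs ! i))"
  using run unfolding alg_run_def by blast

text \<open>Each request counter, at its delay up to \<open>T\<close>, is charged to the event deleting it.\<close>
definition deletion_charge :: "nat \<Rightarrow> real" where
  "deletion_charge i =
     (\<Sum>k<m. (of_bool (deleted L0 el a evs (Suc i) k) - of_bool (deleted L0 el a evs i k)) * d k T)"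

definition counter_charge :: "nat \<Rightarrow> real" where
  "counter_charge i = (case snd (evs ! i) of
      PrefixEv l \<Rightarrow> 0
    | ElemEv e \<Rightarrow> elem_counter L0 m el a D evs i (fst (evs ! i)) e)"

lemma deletion_charge_nonneg: "0 \<le> deletion_charge i"
  unfolding deletion_charge_def
  by (rule sum_nonneg) (use deleted_Suc[of L0 el a evs i] d_nonneg in auto)

lemma prefix_event_cost:
  assumes i: "i < length evs" and ev: "snd (evs ! i) = PrefixEv l"
  shows "event_cost L0 evs i \<le> 2 * deletion_charge i"
proof -
  let ?t = "fst (evs ! i)"
  let ?del = "\<lambda>k. of_bool (deleted L0 el a evs (Suc i) k) - of_bool (deleted L0 el a evs i k) :: real"
  let ?S = "{k. k < m \<and> \<not> deleted L0 el a evs i k \<and> pos (list_before L0 evs i) (el k) \<le> l}"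
  have "real l \<le> (\<Sum>k\<in>?S. d k ?t)"
    using event_enabled[OF i] ev unfolding enabled_def prefix_sum_def by simp
  also have "\<dots> \<le> (\<Sum>k\<in>?S. ?del k * d k T)"
  proof (rule sum_mono)
    fix k assume k: "k \<in> ?S"
    show "d k ?t \<le> ?del k * d k T"
    proof (cases "a k \<le> ?t")
      case True
      then have "deleted L0 el a evs (Suc i) k"
        unfolding deleted_def using k i ev by (intro exI[of _ i]) auto
      then show ?thesis using k d_mono event_time_le[OF i] by simp
    next
      case False
      then show ?thesis using k d_before_arrival d_nonneg deleted_Suc by simp
    qed
  qed
  also have "\<dots> \<le> deletion_charge i"
    unfolding deletion_charge_def
    by (rule sum_mono2) (use deleted_Suc[of L0 el a evs i] d_nonneg in auto)
  finally show ?thesis using event_cost_PrefixEv[OF ev, of L0] by simp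
qed

lemma element_event_cost:
  assumes i: "i < length evs" and ev: "snd (evs ! i) = ElemEv e"
  shows "event_cost L0 evs i \<le> 3 * counter_charge i"
proof -
  have "real (pos (list_before L0 evs i) e) \<le> counter_charge i"
    using event_enabled[OF i] ev unfolding enabled_def counter_charge_def by simp
  then show ?thesis using event_cost_ElemEv[OF ev, of L0] by simp
qed

lemma event_cost_le_charges:
  assumes "i < length evs"
  shows "event_cost L0 evs i \<le> 2 * deletion_charge i + 3 * counter_charge i"
proof (cases "snd (evs ! i)")
  case (PrefixEv l)
  then show ?thesis using prefix_event_cost[OF assms PrefixEv] by (simp add: counter_charge_def)
next
  case (ElemEv e)
  then show ?thesis using element_event_cost[OF assms ElemEv] deletion_charge_nonneg[of i] by linarith
qed

lemma sum_deletion_charge_le: "(\<Sum>i<length evs. deletion_charge i) \<le> (\<Sum>k<m. d k T)"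
proof -
  let ?del = "\<lambda>i k. of_bool (deleted L0 el a evs i k) :: real"
  have "(\<Sum>i<length evs. deletion_charge i) = (\<Sum>k<m. \<Sum>i<length evs. (?del (Suc i) k - ?del i k) * d k T)"
    unfolding deletion_charge_def by (rule sum.swap)
  also have "\<dots> = (\<Sum>k<m. (?del (length evs) k - ?del 0 k) * d k T)"
    by (simp only: sum_distrib_right[symmetric] sum_lessThan_telescope[of "\<lambda>i. ?del i _"])
  also have "\<dots> \<le> (\<Sum>k<m. d k T)"
    by (rule sum_mono) (use not_deleted_0 d_nonneg in auto)
  finally show ?thesis .
qed

definition event_on :: "nat \<Rightarrow> nat \<Rightarrow> bool" where
  "event_on k j \<longleftrightarrow> j < length evs \<and> snd (evs ! j) = ElemEv (el k)"

text \<open>The share of request \<open>k\<close> in \<open>EC\<^bsub>el k\<^esub>\<close> when the \<open>i\<close>-th event is on \<open>el k\<close>.\<close>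
definition counter_increment :: "nat \<Rightarrow> nat \<Rightarrow> real" where
  "counter_increment k i = (if event_on k i
     then d k (fst (evs ! i))
        - (if \<exists>j<i. event_on k j then d k (fst (evs ! (GREATEST j. j < i \<and> event_on k j))) else 0)
     else 0)"

lemma counter_charge_eq:
  assumes i: "i < length evs"
  shows "counter_charge i = (\<Sum>k<m. counter_increment k i)"
proof (cases "snd (evs ! i)")
  case (ElemEv e)
  then show ?thesis
    unfolding counter_charge_def elem_counter_def counter_increment_def event_on_def using i
    by (subst sum.inter_filter[symmetric]) (auto intro!: sum.cong)
qed (simp add: counter_charge_def counter_increment_def event_on_def)

lemma sum_counter_charge_le: "(\<Sum>i<length evs. counter_charge i) \<le> (\<Sum>k<m. d k T)"
proof -
  define last where "last k = (GREATEST j. j < length evs \<and> event_on k j)" for k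
  have "(\<Sum>i<length evs. counter_charge i) = (\<Sum>i<length evs. \<Sum>k<m. counter_increment k i)"
    by (rule sum.cong) (simp_all add: counter_charge_eq)
  also have "\<dots> = (\<Sum>k<m. \<Sum>i<length evs. counter_increment k i)"
    by (rule sum.swap)
  also have "\<dots> = (\<Sum>k<m. if \<exists>j<length evs. event_on k j then d k (fst (evs ! last k)) else 0)"
    unfolding counter_increment_def last_def by (intro sum.cong refl sum_telescope_last_occurrence)
  also have "\<dots> \<le> (\<Sum>k<m. d k T)"
  proof (rule sum_mono)
    fix k assume k: "k \<in> {..<m}"
    have "last k < length evs" if "\<exists>j<length evs. event_on k j"
      using that unfolding last_def by (metis (no_types, lifting) GreatestI_ex_nat less_imp_le)
    then show "(if \<exists>j<length evs. event_on k j then d k (fst (evs ! last k)) else 0) \<le> d k T"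
      using k d_mono event_time_le d_nonneg by auto
  qed
  finally show ?thesis .
qed

lemma alg_cost_le: "alg_cost L0 m el a D T evs \<le> 6 * (\<Sum>k<m. d k T)"
proof -
  have "(\<Sum>i<length evs. event_cost L0 evs i)
      \<le> (\<Sum>i<length evs. 2 * deletion_charge i + 3 * counter_charge i)"
    by (rule sum_mono) (simp add: event_cost_le_charges)
  also have "\<dots> = 2 * (\<Sum>i<length evs. deletion_charge i) + 3 * (\<Sum>i<length evs. counter_charge i)"
    by (simp add: sum.distrib sum_distrib_left)
  finally show ?thesis
    unfolding alg_cost_eq using sum_deletion_charge_le sum_counter_charge_le by linarith
qed

end

theorem mainTheorem11:
  fixes L0 :: "'e list" and m :: nat and el :: "nat \<Rightarrow> 'e" and a :: "nat \<Rightarrow> real"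
    and D :: "nat \<Rightarrow> real \<Rightarrow> real" and T :: real and evs :: "(real \<times> 'e lu_event) list"
  assumes "distinct L0"
    and "\<forall>k<m. el k \<in> set L0"
    and "\<forall>k<m. \<forall>t. 0 \<le> D k t"
    and "\<forall>k<m. mono (D k)"
    and "\<forall>k<m. \<forall>t\<le>a k. D k t = 0"
    and "alg_run L0 m el a D T evs"
  shows "alg_cost L0 m el a D T evs \<le> 6 * (\<Sum>k<m. dly L0 el a D evs k T)"
proof -
  interpret alg_execution L0 m el a D T evs
    using assms(3-6) by unfold_locales auto
  show ?thesis by (rule alg_cost_le)
qed

end
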